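(* Let $f:\mathbb{N}\to[0,\infty)$ be any non-negative function with $\limsup_{n\to\infty} f(n)/n>0$. Then there exists a sequence of real numbers $a(1),a(2),\dots$ such that $a(n+m)\le a(n)+a(m)+f(n+m)$ for all integers $n,m\ge 1$, and $\lim_{n\to\infty} a(n)/n$ does not exist. *)

theory Defs
  imports "HOL-Analysis.Analysis"
begin

end

theory Submission
  imports Defs
begin

text \<open>Pick \<open>c > 0\<close> with \<open>f n > c n\<close> for infinitely many \<open>n\<close>, and let \<open>a n = c n\<close> on an
infinite set of such \<open>n\<close> whose complement is also infinite, \<open>a n = 0\<close> elsewhere. Then
\<open>0 \<le> a \<le> f\<close> on positive integers, so \<open>a (n + m) \<le> f (n + m) \<le> a n + a m + f (n + m)\<close>,
while \<open>a n / n\<close> takes both values \<open>c\<close> and \<open>0\<close> infinitely often.\<close>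

lemma less_LimsupD:
  fixes X :: "_ \<Rightarrow> 'a :: complete_linorder"
  assumes "y < Limsup F X"
  shows "frequently (\<lambda>x. y < X x) F"
proof -
  obtain z where "y < z" "\<not> eventually (\<lambda>x. X x < z) F"
    using assms Limsup_le_iff[of F X y] by (auto simp: not_le)
  show ?thesis
  proof (rule ccontr)
    assume "\<not> frequently (\<lambda>x. y < X x) F"
    then have "eventually (\<lambda>x. X x \<le> y) F"
      by (simp add: not_frequently not_less)
    then have "eventually (\<lambda>x. X x < z) F"
      by (rule eventually_mono) (use \<open>y < z\<close> in auto)
    with \<open>\<not> eventually (\<lambda>x. X x < z) F\<close> show False
      by contradiction
  qed
qed

lemma frequently_split_sequentially:
  assumes "frequently P sequentially"
  obtains Q where "frequently (\<lambda>n. P n \<and> Q n) sequentially" "frequently (\<lambda>n. \<not> Q n) sequentially"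
proof -
  have "frequently (\<lambda>n. P n \<and> even n \<or> P n \<and> odd n) sequentially"
    using assms by (auto elim: frequently_elim1)
  moreover have "frequently (\<lambda>n::nat. Q n) sequentially" if "Q = even \<or> Q = odd" for Q
    unfolding frequently_sequentially
    by (metis that dvd_triv_left even_Suc le_Suc_eq le_add2)
  ultimately show ?thesis
    using that[of odd] that[of even] by (auto simp: frequently_disj_iff)
qed

lemma (in t1_space) not_tendsto_two_frequent_values:
  assumes "frequently (\<lambda>x. f x = u) F" "frequently (\<lambda>x. f x = v) F" "u \<noteq> v"
  shows "\<not> (f \<longlongrightarrow> L) F"
proof -
  have "F \<noteq> bot"
    using assms(1) by (auto simp: frequently_def)
  then show ?thesis
    using assms limit_frequently_eq by metis
qed

theorem mainTheorem7:
  fixes f :: "nat \<Rightarrow> real"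
  assumes f_nonneg: "\<And>n. n \<ge> 1 \<Longrightarrow> f n \<ge> 0"
    and f_limsup: "limsup (\<lambda>n. ereal (f n / real n)) > 0"
  shows "\<exists>a :: nat \<Rightarrow> real.
           (\<forall>n m. n \<ge> 1 \<longrightarrow> m \<ge> 1 \<longrightarrow> a (n + m) \<le> a n + a m + f (n + m)) \<and>
           \<not> (\<exists>L :: ereal. ((\<lambda>n. ereal (a n / real n)) \<longlongrightarrow> L) sequentially)"
proof -
  obtain c :: real where "0 < c" "ereal c < limsup (\<lambda>n. ereal (f n / real n))"
    using ereal_dense2[OF f_limsup] by (metis ereal_less(2))
  then have "frequently (\<lambda>n. c < f n / real n) sequentially"
    using less_LimsupD by fastforce
  then obtain T where T: "frequently (\<lambda>n. c < f n / real n \<and> T n) sequentially"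
    "frequently (\<lambda>n. \<not> T n) sequentially"
    using frequently_split_sequentially by blast
  define a where "a n = (if c < f n / real n \<and> T n then c * real n else 0)" for n
  have a_nonneg: "0 \<le> a n" for n
    using \<open>0 < c\<close> by (simp add: a_def)
  have a_le_f: "a n \<le> f n" if "n \<ge> 1" for n
    using that f_nonneg[OF that] by (simp add: a_def field_simps)
  have "a (n + m) \<le> a n + a m + f (n + m)" if "n \<ge> 1" for n m
    using a_nonneg[of n] a_nonneg[of m] a_le_f[of "n + m"] that by simp
  moreover have "\<not> ((\<lambda>n. ereal (a n / real n)) \<longlongrightarrow> L) sequentially" for L
  proof (rule not_tendsto_two_frequent_values)
    show "frequently (\<lambda>n. ereal (a n / real n) = c) sequentially"
      using T(1) \<open>0 < c\<close> by (auto simp: a_def elim!: frequently_elim1 intro!: gr0I)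
    show "frequently (\<lambda>n. ereal (a n / real n) = 0) sequentially"
      using T(2) by (auto simp: a_def elim!: frequently_elim1)
  qed (use \<open>0 < c\<close> in simp)
  ultimately show ?thesis
    by blast
qed

end
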